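(* Let $R$ be a ring with identity and involution $*$, and let $a,b\in R$ be dual core invertible with dual core inverses $a_{\oplus}$ and $b_{\oplus}$. If $ab=0$ and $ab^*=0$, then $a+b$ is dual core invertible and $$(a+b)_{\oplus}=a_{\oplus}+b_{\oplus}a^{\pi},$$ where $a^{\pi}=1-aa_{\oplus}$.
   Context: An involution on $R$ satisfies $(a^* )^*=a$, $(ab)^*=b^*a^*$, $(a+b)^*=a^*+b^*$. An element $x\in R$ is a dual core inverse of $a$ if $axa=a$, $xR=a^*R$ and $Rx=Ra$; it is unique when it exists and is denoted $a_{\oplus}$. *)

theory Defs
  imports Main
begin

class ring_invol = ring_1 +
  fixes invol :: "'a \<Rightarrow> 'a"
  assumes invol_invol: "invol (invol a) = a"
      and invol_mult: "invol (a * b) = invol b * invol a"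
      and invol_add: "invol (a + b) = invol a + invol b"

definition right_ideal :: "'a::ring_1 \<Rightarrow> 'a set" where
  "right_ideal x = {x * r | r. True}"

definition left_ideal :: "'a::ring_1 \<Rightarrow> 'a set" where
  "left_ideal x = {r * x | r. True}"

definition is_dual_core_inverse :: "'a::ring_invol \<Rightarrow> 'a \<Rightarrow> bool" where
  "is_dual_core_inverse a x \<longleftrightarrow>
     a * x * a = a \<and> right_ideal x = right_ideal (invol a) \<and> left_ideal x = left_ideal a"

definition dual_core_invertible :: "'a::ring_invol \<Rightarrow> bool" where
  "dual_core_invertible a \<longleftrightarrow> (\<exists>x. is_dual_core_inverse a x)"

definition dual_core_inv :: "'a::ring_invol \<Rightarrow> 'a" where
  "dual_core_inv a = (THE x. is_dual_core_inverse a x)"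

end

theory Submission
  imports Defs
begin

text \<open>The ideal conditions \<open>xR = a\<^sup>*R\<close> and \<open>Rx = Ra\<close> are equivalent to the
  equations \<open>xax = x\<close>, \<open>(xa)\<^sup>* = xa\<close>, \<open>a\<^sup>2x = a\<close> and \<open>x\<^sup>2a = x\<close>; in this purely
  equational form the inverse of \<open>a + b\<close> is verified by expanding products, the
  hypotheses \<open>ab = 0\<close> and \<open>ab\<^sup>* = 0\<close> killing every mixed term that is not wanted.\<close>

lemma invol_0 [simp]: "invol (0::'a::ring_invol) = 0"
  using invol_add [of "0::'a" 0] by simp

lemma mem_right_ideal_iff: "y \<in> right_ideal x \<longleftrightarrow> (\<exists>r. y = x * r)"
  unfolding right_ideal_def by auto

lemma mem_left_ideal_iff: "y \<in> left_ideal x \<longleftrightarrow> (\<exists>r. y = r * x)"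
  unfolding left_ideal_def by auto

lemma self_in_right_ideal: "x \<in> right_ideal x"
  unfolding mem_right_ideal_iff by (metis mult_1_right)

lemma self_in_left_ideal: "x \<in> left_ideal x"
  unfolding mem_left_ideal_iff by (metis mult_1_left)

lemma right_ideal_eqI:
  assumes "x = y * r" and "y = x * s"
  shows "right_ideal x = right_ideal y"
  unfolding right_ideal_def using assms by (metis mult.assoc)

lemma left_ideal_eqI:
  assumes "x = r * y" and "y = s * x"
  shows "left_ideal x = left_ideal y"
  unfolding left_ideal_def using assms by (metis mult.assoc)

lemma is_dual_core_inverse_iff:
  fixes a x :: "'a::ring_invol"
  shows "is_dual_core_inverse a x \<longleftrightarrow>
    a * x * a = a \<and> x * a * x = x \<and> invol (x * a) = x * a \<and> a * a * x = a \<and> x * x * a = x"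
    (is "_ \<longleftrightarrow> ?eqs")
proof
  assume "is_dual_core_inverse a x"
  then have axa: "a * x * a = a" and r: "right_ideal x = right_ideal (invol a)"
    and l: "left_ideal x = left_ideal a"
    unfolding is_dual_core_inverse_def by auto
  obtain s where s: "x = invol a * s"
    using self_in_right_ideal [of x] r by (auto simp: mem_right_ideal_iff)
  obtain t where t: "x = t * a"
    using self_in_left_ideal [of x] l by (auto simp: mem_left_ideal_iff)
  obtain u where u: "a = u * x"
    using self_in_left_ideal [of a] by (auto simp: l [symmetric] mem_left_ideal_iff)
  have "invol a = invol a * invol x * invol a"
    using arg_cong [OF axa, of invol] by (simp add: invol_mult mult.assoc)
  moreover have "invol (x * a) * x = invol a * invol x * invol a * s"
    using s by (simp add: invol_mult mult.assoc)
  ultimately have xa_x: "invol (x * a) * x = x"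
    using s by simp
  then have xa_idem: "invol (x * a) * (x * a) = x * a"
    by (metis mult.assoc)
  have "invol (x * a) = invol (invol (x * a) * (x * a))"
    using xa_idem by simp
  also have "\<dots> = invol (x * a) * (x * a)"
    by (simp add: invol_mult invol_invol)
  finally have sym: "invol (x * a) = x * a"
    using xa_idem by simp
  with xa_x have xax: "x * a * x = x" by simp
  have "a * a * x = u * (x * a * x)"
    using u by (simp add: mult.assoc)
  with xax u have aax: "a * a * x = a" by simp
  have "x * x * a = t * (a * x * a)"
    using t by (simp add: mult.assoc)
  with axa t have xxa: "x * x * a = x" by simp
  show ?eqs using axa xax sym aax xxa by blast
next
  assume ?eqs
  then have axa: "a * x * a = a" and xax: "x * a * x = x" and sym: "invol (x * a) = x * a"
    and aax: "a * a * x = a" and xxa: "x * x * a = x"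
    by auto
  have "x = invol a * (invol x * x)"
    using xax sym by (metis invol_mult mult.assoc)
  moreover have "invol a = x * (a * invol a)"
  proof -
    have "invol a = invol (x * a) * invol a"
      using arg_cong [OF axa, of invol] by (simp add: invol_mult mult.assoc)
    with sym show ?thesis
      by (simp add: mult.assoc)
  qed
  ultimately have "right_ideal x = right_ideal (invol a)"
    by (rule right_ideal_eqI)
  moreover have "left_ideal x = left_ideal a"
    using xxa aax by (intro left_ideal_eqI [of _ "x * x" _ "a * a"]) (simp_all add: mult.assoc)
  ultimately show "is_dual_core_inverse a x"
    using axa unfolding is_dual_core_inverse_def by simp
qed

lemma is_dual_core_inverse_unique:
  fixes a x y :: "'a::ring_invol"
  assumes "is_dual_core_inverse a x" and "is_dual_core_inverse a y"
  shows "x = y"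
proof -
  have X: "a * x * a = a" "x * a * x = x" "invol (x * a) = x * a" "a * a * x = a"
    using assms(1) by (simp_all add: is_dual_core_inverse_iff)
  have Y: "a * y * a = a" "invol (y * a) = y * a" "y * y * a = y"
    using assms(2) by (simp_all add: is_dual_core_inverse_iff)
  have "x * a = invol a * invol x"
    using X by (metis invol_mult)
  also have "\<dots> = invol (y * a) * invol (x * a)"
    using Y by (metis invol_mult mult.assoc)
  also have "\<dots> = y * (a * x * a)"
    using X Y by (simp add: mult.assoc)
  finally have xa: "x * a = y * a"
    using X by simp
  have "x = y * a * x"
    using X xa by metis
  also have "\<dots> = y * y * (a * a * x)"
    using Y by (metis mult.assoc)
  also have "\<dots> = y"
    using X Y by (simp add: mult.assoc)
  finally show ?thesis .
qed

lemma dual_core_inv_eq: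
  assumes "is_dual_core_inverse a x"
  shows "dual_core_inv a = x"
  unfolding dual_core_inv_def using assms by (blast intro: is_dual_core_inverse_unique)

lemma is_dual_core_inverse_factors:
  fixes a x :: "'a::ring_invol"
  assumes "is_dual_core_inverse a x"
  shows "x = invol a * (invol x * x)" and "x = x * x * a"
proof -
  have X: "x * a * x = x" "invol (x * a) = x * a" "x * x * a = x"
    using assms by (simp_all add: is_dual_core_inverse_iff)
  then have "x = invol (x * a) * x"
    by simp
  then show "x = invol a * (invol x * x)"
    by (simp add: invol_mult mult.assoc)
  show "x = x * x * a"
    using X by simp
qed

lemma is_dual_core_inverse_orthogonal:
  fixes a b x z :: "'a::ring_invol"
  assumes inv_a: "is_dual_core_inverse a x" and inv_b: "is_dual_core_inverse b z"
    and ab: "a * b = 0" and ab': "a * invol b = 0"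
  shows "b * x = 0" and "a * z = 0" and "x * b = 0" and "x * z = 0" and "z * x = 0"
proof -
  note x_factors = is_dual_core_inverse_factors [OF inv_a]
  note z_factors = is_dual_core_inverse_factors [OF inv_b]
  have ba': "b * invol a = 0"
    using arg_cong [OF ab', of invol] by (simp add: invol_mult invol_invol)
  show bx: "b * x = 0"
    by (subst x_factors(1)) (simp add: ba' mult.assoc [symmetric])
  show az: "a * z = 0"
    by (subst z_factors(1)) (simp add: ab' mult.assoc [symmetric])
  show "x * b = 0"
    by (subst x_factors(2)) (simp add: ab mult.assoc)
  show "x * z = 0"
    by (subst x_factors(2)) (simp add: az mult.assoc)
  show "z * x = 0"
    by (subst z_factors(2)) (simp add: bx mult.assoc)
qed

lemma is_dual_core_inverse_add:
  fixes a b x z :: "'a::ring_invol"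
  assumes inv_a: "is_dual_core_inverse a x" and inv_b: "is_dual_core_inverse b z"
    and ab: "a * b = 0" and ab': "a * invol b = 0"
  shows "is_dual_core_inverse (a + b) (x + z * (1 - a * x))"
proof -
  have X: "a * x * a = a" "x * a * x = x" "invol (x * a) = x * a" "a * a * x = a" "x * x * a = x"
    using inv_a by (simp_all add: is_dual_core_inverse_iff)
  have Z: "b * z * b = b" "z * b * z = z" "invol (z * b) = z * b" "b * b * z = b" "z * z * b = z"
    using inv_b by (simp_all add: is_dual_core_inverse_iff)
  note vanish = ab is_dual_core_inverse_orthogonal [OF assms]
  define c where "c = a + b"
  define y where "y = x + z * (1 - a * x)"
  have "y * c = x * a + x * b + z * a + z * b - z * (a * x * a) - z * a * (x * b)"
    unfolding y_def c_def by (simp add: algebra_simps)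
  then have yc: "y * c = x * a + z * b"
    using X vanish by simp
  have "c * y = a * x + a * z - a * z * a * x + b * x + b * z - b * z * a * x"
    unfolding y_def c_def by (simp add: algebra_simps)
  then have cy: "c * y = a * x + b * z - b * z * a * x"
    using vanish by simp
  have cyc: "c * y * c = c"
  proof -
    have "c * y * c = a * x * a + a * x * b + b * z * a + b * z * b - b * z * a * x * a - b * z * a * x * b"
      unfolding cy unfolding c_def by (simp add: algebra_simps)
    also have "\<dots> = c"
      using X Z vanish unfolding c_def by (simp add: mult.assoc)
    finally show ?thesis .
  qed
  have ycy: "y * c * y = y"
  proof -
    have "y * c * y = x * a * x + x * a * z - x * a * z * a * x + z * b * x + z * b * z - z * b * z * a * x"
      unfolding yc unfolding y_def by (simp add: algebra_simps)
    also have "\<dots> = y"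
      using X Z vanish unfolding y_def by (simp add: mult.assoc right_diff_distrib)
    finally show ?thesis .
  qed
  have yc_sym: "invol (y * c) = y * c"
    unfolding yc using X Z by (simp add: invol_add)
  have ccy: "c * c * y = c"
  proof -
    have "c * c * y = a * a * x + a * b * z - a * b * z * a * x + b * a * x + b * b * z - b * b * z * a * x"
      unfolding mult.assoc [of c c y] cy unfolding c_def by (simp add: algebra_simps)
    also have "\<dots> = c"
      using X Z vanish unfolding c_def by (simp add: mult.assoc)
    finally show ?thesis .
  qed
  have yyc: "y * y * c = y"
  proof -
    have "y * y * c = x * x * a + x * z * b + z * x * a + z * z * b - z * a * x * x * a - z * a * x * z * b"
      unfolding mult.assoc [of y y c] yc unfolding y_def by (simp add: algebra_simps)
    also have "\<dots> = y"
      using X Z vanish unfolding y_def by (simp add: mult.assoc right_diff_distrib)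
    finally show ?thesis .
  qed
  show ?thesis
    using cyc ycy yc_sym ccy yyc unfolding is_dual_core_inverse_iff c_def y_def by blast
qed

theorem theorem4p8:
  fixes a b :: "'a::ring_invol"
  assumes "dual_core_invertible a" and "dual_core_invertible b"
    and "a * b = 0" and "a * invol b = 0"
  shows "dual_core_invertible (a + b) \<and>
         dual_core_inv (a + b) = dual_core_inv a + dual_core_inv b * (1 - a * dual_core_inv a)"
proof -
  obtain x where x: "is_dual_core_inverse a x"
    using assms(1) unfolding dual_core_invertible_def by blast
  obtain z where z: "is_dual_core_inverse b z"
    using assms(2) unfolding dual_core_invertible_def by blast
  have sum: "is_dual_core_inverse (a + b) (x + z * (1 - a * x))"
    using is_dual_core_inverse_add [OF x z assms(3,4)] .
  then show ?thesis
    using dual_core_inv_eq [OF sum] dual_core_inv_eq [OF x] dual_core_inv_eq [OF z]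
    unfolding dual_core_invertible_def by blast
qed

end
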